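(* Let $A$ be a commutative ring, $E$ a non-zero $A$-module and $R=A\propto E$ the trivial ring extension of $A$ by $E$. Then $R$ is a chain ring if and only if $A$ is a valuation domain and $E$ is a uniserial divisible $A$-module.
   Context: All rings are commutative with identity. The trivial ring extension $R=A\propto E$ is the ring with underlying additive group $A\times E$ and multiplication $(a,e)(a',e')=(aa',ae'+a'e)$. A module is uniserial if its submodules are totally ordered by inclusion; a ring is a chain ring if it is uniserial as a module over itself. A module $E$ over a domain $A$ is divisible if $aE=E$ for every non-zero $a\in A$. *)

theory Defs
  imports "HOL-Algebra.Algebra"
begin

definition trivial_ext ::
  "('a, 'c) ring_scheme \<Rightarrow> ('a, 'b, 'd) module_scheme \<Rightarrow> ('a \<times> 'b) ring" where
  "trivial_ext A E =
    \<lparr>carrier = carrier A \<times> carrier E,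
     monoid.mult = (\<lambda>x y. (fst x \<otimes>\<^bsub>A\<^esub> fst y,
                     (fst x \<odot>\<^bsub>E\<^esub> snd y) \<oplus>\<^bsub>E\<^esub> (fst y \<odot>\<^bsub>E\<^esub> snd x))),
     one = (\<one>\<^bsub>A\<^esub>, \<zero>\<^bsub>E\<^esub>),
     ring.zero = (\<zero>\<^bsub>A\<^esub>, \<zero>\<^bsub>E\<^esub>),
     ring.add = (\<lambda>x y. (fst x \<oplus>\<^bsub>A\<^esub> fst y, snd x \<oplus>\<^bsub>E\<^esub> snd y))\<rparr>"

definition uniserial :: "('a, 'c) ring_scheme \<Rightarrow> ('a, 'b, 'd) module_scheme \<Rightarrow> bool" where
  "uniserial A E \<longleftrightarrow>
    (\<forall>H K. submodule H A E \<and> submodule K A E \<longrightarrow> H \<subseteq> K \<or> K \<subseteq> H)"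

text \<open>A (commutative) ring is a chain ring if it is uniserial over itself, i.e. its
  ideals (= submodules of the regular module) are totally ordered by inclusion.\<close>
definition chain_ring :: "('a, 'c) ring_scheme \<Rightarrow> bool" where
  "chain_ring R \<longleftrightarrow> (\<forall>I J. ideal I R \<and> ideal J R \<longrightarrow> I \<subseteq> J \<or> J \<subseteq> I)"

definition valuation_domain :: "('a, 'c) ring_scheme \<Rightarrow> bool" where
  "valuation_domain A \<longleftrightarrow> domain A \<and>
    (\<forall>a\<in>carrier A. \<forall>b\<in>carrier A. a divides\<^bsub>A\<^esub> b \<or> b divides\<^bsub>A\<^esub> a)"

definition divisible :: "('a, 'c) ring_scheme \<Rightarrow> ('a, 'b, 'd) module_scheme \<Rightarrow> bool" where
  "divisible A E \<longleftrightarrow>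
    (\<forall>a\<in>carrier A - {\<zero>\<^bsub>A\<^esub>}. (\<lambda>x. a \<odot>\<^bsub>E\<^esub> x) ` carrier E = carrier E)"

end

theory Submission imports Defs begin

text \<open>A commutative ring is a chain ring iff divisibility is total, and in \<open>A \<propto> E\<close> the
  element \<open>(a, e)\<close> divides \<open>(b, f)\<close> iff \<open>b = ac\<close> and \<open>f = ag + ce\<close> for some \<open>c, g\<close>.
  Comparing \<open>(a, 0)\<close> with \<open>(0, e)\<close> and with \<open>(b, 0)\<close>, and \<open>(0, h)\<close> with \<open>(0, k)\<close>, shows that
  totality forces \<open>E\<close> to be divisible and uniserial and \<open>A\<close> to be totally ordered by
  divisibility; \<open>A\<close> is then a domain because \<open>ab = 0\<close> with \<open>a, b \<noteq> 0\<close> would give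
  \<open>e = (ab)f = 0\<close> for every \<open>e \<in> E = abE\<close>. Conversely, if \<open>E\<close> is divisible and \<open>a \<noteq> 0\<close>,
  then \<open>(a, e)\<close> divides every \<open>(ac, f)\<close>, i.e. it generates \<open>aA \<times> E\<close>; so elements with a
  non-zero first coordinate are compared through divisibility in \<open>A\<close>, and elements of
  \<open>0 \<times> E\<close> through the chain of cyclic submodules of \<open>E\<close>.\<close>

lemma (in cring) chain_ring_iff_divides_total:
  "chain_ring R \<longleftrightarrow> (\<forall>a\<in>carrier R. \<forall>b\<in>carrier R. a divides b \<or> b divides a)"
proof (intro iffI ballI)
  fix a b assume "chain_ring R" and ab: "a \<in> carrier R" "b \<in> carrier R"
  then have "PIdl b \<subseteq> PIdl a \<or> PIdl a \<subseteq> PIdl b"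
    using cgenideal_ideal[OF ab(1)] cgenideal_ideal[OF ab(2)] unfolding chain_ring_def by blast
  then show "a divides b \<or> b divides a"
    using to_contain_is_to_divide[OF ab] to_contain_is_to_divide[OF ab(2,1)] by blast
next
  assume total: "\<forall>a\<in>carrier R. \<forall>b\<in>carrier R. a divides b \<or> b divides a"
  show "chain_ring R"
    unfolding chain_ring_def
  proof (intro allI impI)
    fix I J assume "ideal I R \<and> ideal J R"
    then have I: "ideal I R" and J: "ideal J R" by auto
    show "I \<subseteq> J \<or> J \<subseteq> I"
    proof (rule disjCI)
      assume "\<not> J \<subseteq> I"
      then obtain q where q: "q \<in> J" "q \<notin> I" by blast
      show "I \<subseteq> J"
      proof
        fix p assume p: "p \<in> I"
        have carr: "p \<in> carrier R" "q \<in> carrier R"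
          using ideal.Icarr[OF I p] ideal.Icarr[OF J q(1)] .
        have "p divides q \<or> q divides p"
          using total carr by blast
        then show "p \<in> J"
        proof
          assume "p divides q"
          then have "q \<in> PIdl p"
            using to_contain_is_to_divide[OF carr] cgenideal_self[OF carr(2)] by blast
          then show ?thesis
            using cgenideal_minimal[OF I p] q(2) by blast
        next
          assume "q divides p"
          then have "p \<in> PIdl q"
            using to_contain_is_to_divide[OF carr(2,1)] cgenideal_self[OF carr(1)] by blast
          then show ?thesis
            using cgenideal_minimal[OF J q(1)] by blast
        qed
      qed
    qed
  qed
qed

lemma trivial_ext_simps:
  "carrier (trivial_ext A E) = carrier A \<times> carrier E"
  "(x \<otimes>\<^bsub>trivial_ext A E\<^esub> y) = (fst x \<otimes>\<^bsub>A\<^esub> fst y, (fst x \<odot>\<^bsub>E\<^esub> snd y) \<oplus>\<^bsub>E\<^esub> (fst y \<odot>\<^bsub>E\<^esub> snd x))"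
  "\<one>\<^bsub>trivial_ext A E\<^esub> = (\<one>\<^bsub>A\<^esub>, \<zero>\<^bsub>E\<^esub>)"
  "\<zero>\<^bsub>trivial_ext A E\<^esub> = (\<zero>\<^bsub>A\<^esub>, \<zero>\<^bsub>E\<^esub>)"
  "(x \<oplus>\<^bsub>trivial_ext A E\<^esub> y) = (fst x \<oplus>\<^bsub>A\<^esub> fst y, snd x \<oplus>\<^bsub>E\<^esub> snd y)"
  by (simp_all add: trivial_ext_def)

lemma divisibleE:
  assumes "divisible A E" "a \<in> carrier A" "a \<noteq> \<zero>\<^bsub>A\<^esub>" "x \<in> carrier E"
  obtains y where "y \<in> carrier E" "x = a \<odot>\<^bsub>E\<^esub> y"
proof -
  have "x \<in> (\<lambda>y. a \<odot>\<^bsub>E\<^esub> y) ` carrier E"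
    using assms unfolding divisible_def by blast
  then show thesis
    using that by blast
qed

context module
begin

lemma smult_left_commute:
  "a \<in> carrier R \<Longrightarrow> b \<in> carrier R \<Longrightarrow> x \<in> carrier M \<Longrightarrow>
   a \<odot>\<^bsub>M\<^esub> (b \<odot>\<^bsub>M\<^esub> x) = b \<odot>\<^bsub>M\<^esub> (a \<odot>\<^bsub>M\<^esub> x)"
  by (metis smult_assoc1 R.m_comm)

lemma cring_trivial_ext: "cring (trivial_ext R M)"
proof (rule cringI)
  show "abelian_group (trivial_ext R M)"
  proof (rule abelian_groupI)
    fix x assume "x \<in> carrier (trivial_ext R M)"
    then show "\<exists>y\<in>carrier (trivial_ext R M). y \<oplus>\<^bsub>trivial_ext R M\<^esub> x = \<zero>\<^bsub>trivial_ext R M\<^esub>"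
      by (intro bexI[of _ "(\<ominus> fst x, \<ominus>\<^bsub>M\<^esub> snd x)"])
        (auto simp: trivial_ext_simps R.l_neg M.l_neg)
  qed (auto simp: trivial_ext_simps R.a_ac M.a_ac)
  show "comm_monoid (trivial_ext R M)"
    by (rule comm_monoidI)
      (auto simp: trivial_ext_simps R.m_ac M.a_ac smult_r_distr smult_assoc1 smult_left_commute)
next
  fix x y z assume "x \<in> carrier (trivial_ext R M)" "y \<in> carrier (trivial_ext R M)"
      "z \<in> carrier (trivial_ext R M)"
  then show "(x \<oplus>\<^bsub>trivial_ext R M\<^esub> y) \<otimes>\<^bsub>trivial_ext R M\<^esub> z =
     x \<otimes>\<^bsub>trivial_ext R M\<^esub> z \<oplus>\<^bsub>trivial_ext R M\<^esub> y \<otimes>\<^bsub>trivial_ext R M\<^esub> z"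
    by (auto simp: trivial_ext_simps R.l_distr M.a_ac smult_r_distr smult_l_distr)
qed

lemma trivial_ext_divides_iff:
  assumes "a \<in> carrier R" "e \<in> carrier M"
  shows "(a, e) divides\<^bsub>trivial_ext R M\<^esub> (b, f) \<longleftrightarrow>
    (\<exists>c\<in>carrier R. \<exists>g\<in>carrier M. b = a \<otimes> c \<and> f = (a \<odot>\<^bsub>M\<^esub> g) \<oplus>\<^bsub>M\<^esub> (c \<odot>\<^bsub>M\<^esub> e))"
  unfolding factor_def by (auto simp: trivial_ext_simps)

lemma cyclic_submodule:
  assumes "e \<in> carrier M"
  shows "submodule {r \<odot>\<^bsub>M\<^esub> e | r. r \<in> carrier R} R M"
proof (rule submoduleI)
  show "\<zero>\<^bsub>M\<^esub> \<in> {r \<odot>\<^bsub>M\<^esub> e | r. r \<in> carrier R}"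
    using assms by (metis (mono_tags, lifting) R.zero_closed mem_Collect_eq smult_l_null)
  show "\<And>x. x \<in> {r \<odot>\<^bsub>M\<^esub> e | r. r \<in> carrier R} \<Longrightarrow>
            \<ominus>\<^bsub>M\<^esub> x \<in> {r \<odot>\<^bsub>M\<^esub> e | r. r \<in> carrier R}"
    using assms by (force simp: smult_l_minus[symmetric])
  show "\<And>x y. x \<in> {r \<odot>\<^bsub>M\<^esub> e | r. r \<in> carrier R} \<Longrightarrow> y \<in> {r \<odot>\<^bsub>M\<^esub> e | r. r \<in> carrier R} \<Longrightarrow>
            x \<oplus>\<^bsub>M\<^esub> y \<in> {r \<odot>\<^bsub>M\<^esub> e | r. r \<in> carrier R}"
    using assms by (force simp: smult_l_distr[symmetric])
  show "\<And>c x. c \<in> carrier R \<Longrightarrow> x \<in> {r \<odot>\<^bsub>M\<^esub> e | r. r \<in> carrier R} \<Longrightarrow>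
            c \<odot>\<^bsub>M\<^esub> x \<in> {r \<odot>\<^bsub>M\<^esub> e | r. r \<in> carrier R}"
    using assms by (force simp: smult_assoc1[symmetric])
qed (use assms in auto)

lemma uniserial_imp_cyclic_total:
  assumes "uniserial R M" "e \<in> carrier M" "f \<in> carrier M"
  shows "(\<exists>r\<in>carrier R. e = r \<odot>\<^bsub>M\<^esub> f) \<or> (\<exists>r\<in>carrier R. f = r \<odot>\<^bsub>M\<^esub> e)"
proof -
  have "e \<in> {r \<odot>\<^bsub>M\<^esub> e | r. r \<in> carrier R}" "f \<in> {r \<odot>\<^bsub>M\<^esub> f | r. r \<in> carrier R}"
    using assms by (metis (mono_tags, lifting) R.one_closed mem_Collect_eq smult_one)+
  then show ?thesis
    using assms cyclic_submodule unfolding uniserial_def by blast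
qed

lemma divisible_imp_domain:
  assumes div: "divisible R M" and nz: "carrier M \<noteq> {\<zero>\<^bsub>M\<^esub>}"
  shows "domain R"
proof (intro domain.intro is_cring domain_axioms.intro)
  obtain e where e: "e \<in> carrier M" "e \<noteq> \<zero>\<^bsub>M\<^esub>" using nz M.zero_closed by blast
  show "\<one> \<noteq> \<zero>"
    using e by (metis smult_l_null smult_one)
  fix a b assume ab: "a \<otimes> b = \<zero>" "a \<in> carrier R" "b \<in> carrier R"
  show "a = \<zero> \<or> b = \<zero>"
  proof (rule ccontr)
    assume "\<not> (a = \<zero> \<or> b = \<zero>)"
    then have a: "a \<noteq> \<zero>" and b: "b \<noteq> \<zero>" by auto
    obtain g where g: "g \<in> carrier M" "e = a \<odot>\<^bsub>M\<^esub> g"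
      by (rule divisibleE[OF div ab(2) a e(1)])
    obtain f where f: "f \<in> carrier M" "g = b \<odot>\<^bsub>M\<^esub> f"
      by (rule divisibleE[OF div ab(3) b g(1)])
    have "e = (a \<otimes> b) \<odot>\<^bsub>M\<^esub> f"
      using g f ab(2,3) by (simp add: smult_assoc1)
    then show False
      using ab e f by simp
  qed
qed

lemma divisible_imp_trivial_ext_divides:
  assumes div: "divisible R M" and a: "a \<in> carrier R" "a \<noteq> \<zero>" and e: "e \<in> carrier M"
    and c: "c \<in> carrier R" and f: "f \<in> carrier M"
  shows "(a, e) divides\<^bsub>trivial_ext R M\<^esub> (a \<otimes> c, f)"
proof -
  obtain g where g: "g \<in> carrier M" "f \<ominus>\<^bsub>M\<^esub> (c \<odot>\<^bsub>M\<^esub> e) = a \<odot>\<^bsub>M\<^esub> g"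
    by (rule divisibleE[OF div a M.minus_closed[OF f smult_closed[OF c e]]])
  then have "f = (a \<odot>\<^bsub>M\<^esub> g) \<oplus>\<^bsub>M\<^esub> (c \<odot>\<^bsub>M\<^esub> e)"
    using a e c f by (metis M.add.inv_solve_right' M.minus_eq smult_closed)
  then show ?thesis
    using a e c g by (auto simp: trivial_ext_divides_iff)
qed

lemma chain_ring_trivial_ext_divides_total:
  assumes "chain_ring (trivial_ext R M)"
    and "p \<in> carrier (trivial_ext R M)" "q \<in> carrier (trivial_ext R M)"
  shows "p divides\<^bsub>trivial_ext R M\<^esub> q \<or> q divides\<^bsub>trivial_ext R M\<^esub> p"
  using assms cring.chain_ring_iff_divides_total[OF cring_trivial_ext] by blast

lemma chain_ring_trivial_ext_imp_divisible:
  assumes "chain_ring (trivial_ext R M)"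
  shows "divisible R M"
  unfolding divisible_def
proof (intro ballI equalityI subsetI)
  fix a e assume a: "a \<in> carrier R - {\<zero>}" and e: "e \<in> carrier M"
  have "(a, \<zero>\<^bsub>M\<^esub>) divides\<^bsub>trivial_ext R M\<^esub> (\<zero>, e) \<or> (\<zero>, e) divides\<^bsub>trivial_ext R M\<^esub> (a, \<zero>\<^bsub>M\<^esub>)"
    using assms a e by (intro chain_ring_trivial_ext_divides_total) (auto simp: trivial_ext_simps)
  then show "e \<in> (\<lambda>x. a \<odot>\<^bsub>M\<^esub> x) ` carrier M"
    using a e by (auto simp: trivial_ext_divides_iff)
qed auto

lemma chain_ring_trivial_ext_imp_uniserial:
  assumes "chain_ring (trivial_ext R M)"
  shows "uniserial R M"
  unfolding uniserial_def
proof (intro allI impI)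
  fix H K assume HK: "submodule H R M \<and> submodule K R M"
  then have sub: "H \<subseteq> carrier M" "K \<subseteq> carrier M" by (auto dest: submoduleE(1))
  show "H \<subseteq> K \<or> K \<subseteq> H"
  proof (rule ccontr)
    assume "\<not> ?thesis"
    then obtain h k where hk: "h \<in> H" "h \<notin> K" "k \<in> K" "k \<notin> H" by blast
    have "(\<zero>, h) divides\<^bsub>trivial_ext R M\<^esub> (\<zero>, k) \<or> (\<zero>, k) divides\<^bsub>trivial_ext R M\<^esub> (\<zero>, h)"
      using assms hk sub by (intro chain_ring_trivial_ext_divides_total) (auto simp: trivial_ext_simps)
    moreover have "h \<in> carrier M" "k \<in> carrier M" using hk sub by auto
    ultimately show False
      using hk HK submodule.smult_closed by (fastforce simp: trivial_ext_divides_iff)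
  qed
qed

lemma chain_ring_trivial_ext_imp_valuation_domain:
  assumes "chain_ring (trivial_ext R M)" and "carrier M \<noteq> {\<zero>\<^bsub>M\<^esub>}"
  shows "valuation_domain R"
  unfolding valuation_domain_def
proof (intro conjI ballI)
  show "domain R"
    using assms chain_ring_trivial_ext_imp_divisible divisible_imp_domain by blast
next
  fix a b assume ab: "a \<in> carrier R" "b \<in> carrier R"
  have "(a, \<zero>\<^bsub>M\<^esub>) divides\<^bsub>trivial_ext R M\<^esub> (b, \<zero>\<^bsub>M\<^esub>) \<or> (b, \<zero>\<^bsub>M\<^esub>) divides\<^bsub>trivial_ext R M\<^esub> (a, \<zero>\<^bsub>M\<^esub>)"
    using assms ab by (intro chain_ring_trivial_ext_divides_total) (auto simp: trivial_ext_simps)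
  then show "a divides b \<or> b divides a"
    unfolding trivial_ext_divides_iff[OF ab(1) M.zero_closed] trivial_ext_divides_iff[OF ab(2) M.zero_closed]
    by (auto simp: factor_def)
qed

lemma trivial_ext_divides_total_nonzero:
  assumes vd: "valuation_domain R" and div: "divisible R M"
    and a: "a \<in> carrier R" "a \<noteq> \<zero>" "e \<in> carrier M" and b: "b \<in> carrier R" "f \<in> carrier M"
  shows "(a, e) divides\<^bsub>trivial_ext R M\<^esub> (b, f) \<or> (b, f) divides\<^bsub>trivial_ext R M\<^esub> (a, e)"
proof -
  have "a divides b \<or> b divides a"
    using vd a b unfolding valuation_domain_def by blast
  then show ?thesis
  proof
    assume "a divides b"
    then obtain c where "c \<in> carrier R" "b = a \<otimes> c" unfolding factor_def by blast
    then show ?thesis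
      using divisible_imp_trivial_ext_divides[OF div a] b by blast
  next
    assume "b divides a"
    then obtain c where c: "c \<in> carrier R" "a = b \<otimes> c" unfolding factor_def by blast
    then have "b \<noteq> \<zero>" using a by auto
    then show ?thesis
      using divisible_imp_trivial_ext_divides[OF div b(1) _ b(2) c(1) a(3)] c(2) by blast
  qed
qed

lemma trivial_ext_divides_total:
  assumes vd: "valuation_domain R" and uni: "uniserial R M" and div: "divisible R M"
    and p: "p \<in> carrier (trivial_ext R M)" and q: "q \<in> carrier (trivial_ext R M)"
  shows "p divides\<^bsub>trivial_ext R M\<^esub> q \<or> q divides\<^bsub>trivial_ext R M\<^esub> p"
proof -
  obtain a e b f where pq: "p = (a, e)" "q = (b, f)" "a \<in> carrier R" "e \<in> carrier M"
    "b \<in> carrier R" "f \<in> carrier M"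
    using p q by (auto simp: trivial_ext_simps)
  consider "a = \<zero>" "b = \<zero>" | "a \<noteq> \<zero>" | "b \<noteq> \<zero>" by blast
  then show ?thesis
  proof cases
    case 1
    then show ?thesis
      using uniserial_imp_cyclic_total[OF uni pq(4,6)] pq
      by (force simp: trivial_ext_divides_iff)
  qed (use trivial_ext_divides_total_nonzero[OF vd div] pq in blast)+
qed

end

theorem proposition1p1:
  fixes A :: "('a, 'c) ring_scheme" and E :: "('a, 'b, 'd) module_scheme"
  assumes "module A E"
    and "carrier E \<noteq> {\<zero>\<^bsub>E\<^esub>}"
  shows "chain_ring (trivial_ext A E) \<longleftrightarrow>
           valuation_domain A \<and> uniserial A E \<and> divisible A E"
proof -
  interpret module A E by fact
  interpret T: cring "trivial_ext A E" by (rule cring_trivial_ext)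
  show ?thesis
  proof
    assume ch: "chain_ring (trivial_ext A E)"
    show "valuation_domain A \<and> uniserial A E \<and> divisible A E"
      using chain_ring_trivial_ext_imp_valuation_domain[OF ch assms(2)]
        chain_ring_trivial_ext_imp_uniserial[OF ch] chain_ring_trivial_ext_imp_divisible[OF ch]
      by blast
  next
    assume "valuation_domain A \<and> uniserial A E \<and> divisible A E"
    then show "chain_ring (trivial_ext A E)"
      unfolding T.chain_ring_iff_divides_total using trivial_ext_divides_total by blast
  qed
qed

end
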